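(* Let $Y\in\mathbb{R}$, $Z=(Z^{(1)},\dots,Z^{(p)})\in\mathbb{R}^p$, $X=(X^{(1)},\dots,X^{(d)})\in\mathbb{R}^d$ and $W\in\mathbb{R}^d$ be random variables/vectors with finite second moments, and write $$\mathrm{Cov}\begin{pmatrix} Z\\ X\\ W\end{pmatrix}=\begin{bmatrix} A & B & C\\ B^{\mathsf T} & D & F\\ C^{\mathsf T} & F^{\mathsf T} & G\end{bmatrix},\quad A\in\mathbb{R}^{p\times p},\ B,C\in\mathbb{R}^{p\times d},\ D,F,G\in\mathbb{R}^{d\times d}.$$ Let $(\alpha,\beta_Z,\beta_X)=\arg\min_{a\in\mathbb{R},b_Z\in\mathbb{R}^p,b_X\in\mathbb{R}^d}\mathbb{E}\big[\tfrac12(Y-a-Z^{\mathsf T}b_Z-X^{\mathsf T}b_X)^2\big]$ be the population regression coefficients. Let $(Y_i,Z_i,X_i,W_i)_{i=1}^N$ be samples satisfying: (i) the samples are identically distributed with the law of $(Y,Z,X,W)$, and the sample first and second moments (all entries of the sample analogues of $\mathbb{E}[V]$ and $\mathbb{E}[VV^{\mathsf T}]$, $V=(Y,Z,X,W)$) converge in probability to the corresponding population moments as $N\to\infty$; (ii) with $\varepsilon_i=Y_i-\alpha-Z_i^{\mathsf T}\beta_Z-X_i^{\mathsf T}\beta_X$, $\varepsilon_i$ is uncorrelated with $W_i-X_i$; (iii) the covariance matrices of $(Z,W)$ and of $(Z,X)$ are positive definite. Let $\hat\beta_Z^{(\mathrm{OM})}$ be the OLS coefficient vector for $Z$ in the regression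 of $Y_i$ on an intercept and $Z_i$ (omitting $X$), and define $\mathrm{bias}^{(\mathrm{OM})}_{\beta_Z}=\operatorname{plim}_{N\to\infty}\big(\hat\beta_Z^{(\mathrm{OM})}-\beta_Z\big)$. Suppose that all entries of $X$ are pollutant concentrations and that a subset $P\subseteq\{1,\dots,p\}$ of the entries of $Z$ are pollutant concentrations. Assume: (No Benefit) $\beta_{X,j}\le 0$ for all $j\in\{1,\dots,d\}$ and $\beta_{Z,l}\le 0$ for all $l\in P$; (Weak Partial $\mathrm{PC}_+$) for each $l\in P$ and each $j\in\{1,\dots,d\}$, the partial correlation of $Z^{(l)}$ and $X^{(j)}$ conditional on $(Z^{(m)})_{m\ne l}$ is positive. Then for every $k\in P$, $\big[\mathrm{bias}^{(\mathrm{OM})}_{\beta_Z}\big]_k\le 0$.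
   Context: Partial correlation of two entries $U,V$ of a random vector given a set of other entries is the correlation between the population linear-regression residuals of $U$ and of $V$ on those other entries (equivalently, computed from the inverse covariance matrix). "plim" denotes limit in probability. *)

theory Defs
  imports "HOL-Probability.Probability"
begin

definition cov :: "'a measure \<Rightarrow> ('a \<Rightarrow> real) \<Rightarrow> ('a \<Rightarrow> real) \<Rightarrow> real" where
  "cov M f g = integral\<^sup>L M (\<lambda>\<omega>. f \<omega> * g \<omega>) - integral\<^sup>L M f * integral\<^sup>L M g"

definition corr :: "'a measure \<Rightarrow> ('a \<Rightarrow> real) \<Rightarrow> ('a \<Rightarrow> real) \<Rightarrow> real" where
  "corr M f g = cov M f g / (sqrt (cov M f f) * sqrt (cov M g g))"

definition covmat :: "'a measure \<Rightarrow> ('a \<Rightarrow> real^'n) \<Rightarrow> real^'n^'n" where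
  "covmat M U = (\<chi> i j. cov M (\<lambda>\<omega>. U \<omega> $ i) (\<lambda>\<omega>. U \<omega> $ j))"

definition pos_def_mat :: "real^'n^'n \<Rightarrow> bool" where
  "pos_def_mat S \<longleftrightarrow> (\<forall>x. x \<noteq> 0 \<longrightarrow> x \<bullet> (S *v x) > 0)"

definition vstack :: "real^'m \<Rightarrow> real^'n \<Rightarrow> real^('m + 'n)" where
  "vstack u v = (\<chi> k. case k of Inl i \<Rightarrow> u $ i | Inr j \<Rightarrow> v $ j)"

definition is_lin_resid ::
  "'a measure \<Rightarrow> ('a \<Rightarrow> real) \<Rightarrow> ('i \<Rightarrow> 'a \<Rightarrow> real) \<Rightarrow> 'i set \<Rightarrow> ('a \<Rightarrow> real) \<Rightarrow> bool" where
  "is_lin_resid M U Zs S R \<longleftrightarrow>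
     (\<exists>c b. R = (\<lambda>\<omega>. U \<omega> - c - (\<Sum>m\<in>S. b m * Zs m \<omega>)) \<and>
        (\<forall>c' b'. integral\<^sup>L M (\<lambda>\<omega>. (U \<omega> - c - (\<Sum>m\<in>S. b m * Zs m \<omega>))^2)
                \<le> integral\<^sup>L M (\<lambda>\<omega>. (U \<omega> - c' - (\<Sum>m\<in>S. b' m * Zs m \<omega>))^2)))"

definition partial_corr ::
  "'a measure \<Rightarrow> ('a \<Rightarrow> real) \<Rightarrow> ('a \<Rightarrow> real) \<Rightarrow> ('i \<Rightarrow> 'a \<Rightarrow> real) \<Rightarrow> 'i set \<Rightarrow> real" where
  "partial_corr M U V Zs S =
     corr M (SOME R. is_lin_resid M U Zs S R) (SOME R. is_lin_resid M V Zs S R)"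

text \<open>Convergence in probability (inner-probability form; it agrees with the usual
  notion for measurable sequences, and does not silently succeed on non-measurable
  events).\<close>
definition conv_in_prob :: "'a measure \<Rightarrow> (nat \<Rightarrow> 'a \<Rightarrow> 'b::metric_space) \<Rightarrow> 'b \<Rightarrow> bool" where
  "conv_in_prob M S c \<longleftrightarrow>
     (\<forall>e>0. \<forall>\<delta>>0. \<exists>N0. \<forall>N\<ge>N0. \<exists>A\<in>sets M. measure M A \<ge> 1 - \<delta> \<and>
        (\<forall>\<omega>\<in>A. dist (S N \<omega>) c \<le> e))"

definition ols_slope :: "nat \<Rightarrow> (nat \<Rightarrow> real) \<Rightarrow> (nat \<Rightarrow> real^'p) \<Rightarrow> real^'p" where
  "ols_slope N y z = snd (SOME (a, b). \<forall>a' b'.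
      (\<Sum>i<N. (y i - a - z i \<bullet> b)^2) \<le> (\<Sum>i<N. (y i - a' - z i \<bullet> b')^2))"

definition stackV :: "real \<Rightarrow> real^'p \<Rightarrow> real^'d \<Rightarrow> real^'d \<Rightarrow> real^(1 + ('p + ('d + 'd)))" where
  "stackV y z x w = vstack (\<chi> _. y) (vstack z (vstack x w))"

end

theory Submission
  imports Defs
begin

text \<open>
  Let \<open>b\<close> be the population slope of the short regression, \<open>Cov(Z) b = Cov(Z, Y)\<close>.
  The normal equations of the long regression give \<open>Cov(Z) (b - \<beta>Z) = Cov(Z, X) \<beta>X\<close>.
  Let \<open>R = u \<bullet> Z - c\<close>, with \<open>u $ k = 1\<close>, be the residual of \<open>Z $ k\<close> on the other
  entries of \<open>Z\<close>; it is uncorrelated with them. Pairing the identity with \<open>u\<close> gives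
  \<open>(b - \<beta>Z) $ k * Cov(Z $ k, R) = (\<Sum>j. \<beta>X $ j * Cov(X $ j, R))\<close>, where
  \<open>Cov(Z $ k, R) = u \<bullet> (Cov(Z) u) > 0\<close> and \<open>Cov(X $ j, R)\<close> is the numerator of the
  partial correlation of \<open>Z $ k\<close> and \<open>X $ j\<close>, hence positive. As \<open>\<beta>X \<le> 0\<close>,
  \<open>(b - \<beta>Z) $ k \<le> 0\<close>.

  The OLS slope is the population slope for the uniform distribution on the first \<open>N\<close>
  samples, so it solves the empirical normal equations. Their coefficients converge in
  probability to the population ones, and a small perturbation of a positive definite system
  moves its solution only a little, so the OLS slope converges in probability to \<open>b\<close>.
\<close>

section \<open>Positive definite matrices\<close>

lemma pos_def_mat_solvable:
  fixes A :: "real^'n^'n"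
  assumes "pos_def_mat A"
  obtains x where "A *v x = c"
proof -
  have "x = 0" if "A *v x = 0" for x
    using assms that unfolding pos_def_mat_def by force
  then have "surj ((*v) A)"
    using matrix_left_invertible_ker invertible_left_inverse invertible_right_inverse
      matrix_right_invertible_surjective by metis
  then show ?thesis
    using that by (metis surjD)
qed

lemma pos_def_mat_restrict:
  fixes A :: "real^'n^'n"
  assumes pd: "pos_def_mat A"
  shows "pos_def_mat (\<chi> i j. if i \<in> S \<and> j \<in> S then A $ i $ j else if i = j then 1 else 0)"
    (is "pos_def_mat ?A")
  unfolding pos_def_mat_def
proof (intro allI impI)
  fix v :: "real^'n"
  assume "v \<noteq> 0"
  define w :: "real^'n" where "w = (\<chi> i. if i \<in> S then v $ i else 0)"
  define r where "r = (\<Sum>i\<in>UNIV. if i \<in> S then 0 else (v $ i)\<^sup>2)"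
  have row: "(?A *v v) $ i = (if i \<in> S then (A *v w) $ i else v $ i)" for i
  proof (cases "i \<in> S")
    case True
    then show ?thesis
      unfolding matrix_vector_mult_def w_def by (auto intro!: sum.cong)
  next
    case False
    then show ?thesis
      by (simp add: matrix_vector_mult_def if_distrib[of "\<lambda>x. x * _"] cong: if_cong)
  qed
  have "v \<bullet> (?A *v v) = (\<Sum>i\<in>UNIV. if i \<in> S then w $ i * (A *v w) $ i else (v $ i)\<^sup>2)"
    unfolding inner_vec_def row by (intro sum.cong refl) (simp add: w_def power2_eq_square)
  also have "\<dots> = w \<bullet> (A *v w) + r"
    unfolding inner_vec_def r_def sum.distrib[symmetric] by (intro sum.cong) (auto simp: w_def)
  finally have eq: "v \<bullet> (?A *v v) = w \<bullet> (A *v w) + r" .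
  have r0: "0 \<le> r"
    unfolding r_def by (intro sum_nonneg) auto
  show "0 < v \<bullet> (?A *v v)"
  proof (cases "w = 0")
    case True
    obtain i where "v $ i \<noteq> 0"
      using \<open>v \<noteq> 0\<close> by (metis vec_eq_iff zero_index)
    moreover have "i \<notin> S"
      using True calculation by (auto simp: w_def vec_eq_iff split: if_splits)
    ultimately have "0 < (if i \<in> S then 0 else (v $ i)\<^sup>2)"
      by simp
    also have "\<dots> \<le> r"
      unfolding r_def by (rule member_le_sum) auto
    finally show ?thesis
      using eq True by simp
  next
    case False
    then show ?thesis
      using pd r0 eq unfolding pos_def_mat_def by (metis add_pos_nonneg)
  qed
qed

lemma pos_def_mat_solvable_on:
  fixes A :: "real^'n^'n"
  assumes "pos_def_mat A"
  obtains x where "\<And>i. i \<in> S \<Longrightarrow> (\<Sum>j\<in>S. A $ i $ j * x $ j) = c $ i"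
proof -
  obtain x where x: "(\<chi> i j. if i \<in> S \<and> j \<in> S then A $ i $ j else if i = j then 1 else 0) *v x = c"
    using pos_def_mat_solvable[OF pos_def_mat_restrict[OF assms]] .
  have "(\<Sum>j\<in>S. A $ i $ j * x $ j) = c $ i" if "i \<in> S" for i
  proof -
    have "(\<Sum>j\<in>S. A $ i $ j * x $ j) = (\<Sum>j\<in>UNIV. if j \<in> S then A $ i $ j * x $ j else 0)"
      by (simp add: sum.inter_restrict[symmetric])
    also have "\<dots> = c $ i"
      using that unfolding x[symmetric] matrix_vector_mult_def by (auto intro!: sum.cong)
    finally show ?thesis .
  qed
  then show ?thesis
    by (rule that)
qed

lemma pos_def_mat_coercive:
  fixes A :: "real^'n^'n"
  assumes "pos_def_mat A"
  obtains \<mu> where "0 < \<mu>" "\<And>v. \<mu> * (norm v)\<^sup>2 \<le> v \<bullet> (A *v v)"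
proof -
  have "continuous_on (sphere 0 1) (\<lambda>v::real^'n. v \<bullet> (A *v v))"
    by (intro continuous_intros)
  moreover have "sphere (0::real^'n) 1 \<noteq> {}"
    by (metis ex_in_conv mem_sphere_0 norm_axis_1)
  ultimately obtain x where x: "x \<in> sphere 0 1" "\<And>y. y \<in> sphere 0 1 \<Longrightarrow> x \<bullet> (A *v x) \<le> y \<bullet> (A *v y)"
    using continuous_attains_inf[OF compact_sphere] by blast
  have "x \<bullet> (A *v x) * (norm v)\<^sup>2 \<le> v \<bullet> (A *v v)" for v
  proof (cases "v = 0")
    case False
    then have "x \<bullet> (A *v x) \<le> ((1 / norm v) *\<^sub>R v) \<bullet> (A *v ((1 / norm v) *\<^sub>R v))"
      by (intro x(2)) simp
    also have "\<dots> = v \<bullet> (A *v v) / (norm v)\<^sup>2"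
      by (simp add: matrix_vector_mult_scaleR power2_eq_square)
    finally show ?thesis
      using False by (simp add: field_simps)
  qed simp
  moreover have "x \<noteq> 0"
    using x(1) by auto
  then have "0 < x \<bullet> (A *v x)"
    using assms unfolding pos_def_mat_def by blast
  ultimately show ?thesis
    using that by blast
qed

lemma inner_matrix_vector_abs_le:
  fixes E :: "real^'n^'n" and \<tau> :: real
  assumes "\<And>i j. \<bar>E $ i $ j\<bar> \<le> \<tau>"
  shows "\<bar>u \<bullet> (E *v v)\<bar> \<le> \<tau> * CARD('n)\<^sup>2 * norm u * norm v"
proof -
  have "\<bar>u \<bullet> (E *v v)\<bar> \<le> (\<Sum>i\<in>UNIV. \<Sum>j\<in>UNIV. \<bar>u $ i * E $ i $ j * v $ j\<bar>)"
    unfolding inner_vec_def matrix_vector_mult_def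
    by (simp add: sum_distrib_left mult.assoc order.trans[OF sum_abs sum_mono[OF sum_abs]])
  also have "\<dots> \<le> (\<Sum>i\<in>(UNIV::'n set). \<Sum>j\<in>(UNIV::'n set). norm u * \<tau> * norm v)"
    using assms by (intro sum_mono)
      (simp add: abs_mult mult_mono component_le_norm_cart order.trans[OF abs_ge_zero assms])
  also have "\<dots> = \<tau> * CARD('n)\<^sup>2 * norm u * norm v"
    by (simp add: power2_eq_square)
  finally show ?thesis .
qed

lemma coercive_perturb:
  fixes A S :: "real^'n^'n" and \<tau> :: real
  assumes coercive: "\<And>v. \<mu> * (norm v)\<^sup>2 \<le> v \<bullet> (A *v v)"
    and close: "\<And>i j. \<bar>S $ i $ j - A $ i $ j\<bar> \<le> \<tau>" and small: "\<tau> * CARD('n)\<^sup>2 \<le> \<mu> / 2"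
  shows "\<mu> / 2 * (norm v)\<^sup>2 \<le> v \<bullet> (S *v v)"
proof -
  have "\<bar>v \<bullet> ((S - A) *v v)\<bar> \<le> \<tau> * CARD('n)\<^sup>2 * (norm v)\<^sup>2"
    using inner_matrix_vector_abs_le[of "S - A" \<tau> v v] close
    by (simp add: power2_eq_square mult.assoc)
  also have "\<dots> \<le> \<mu> / 2 * (norm v)\<^sup>2"
    using small by (intro mult_right_mono) auto
  finally have "\<bar>v \<bullet> (S *v v) - v \<bullet> (A *v v)\<bar> \<le> \<mu> / 2 * (norm v)\<^sup>2"
    by (simp add: matrix_vector_mult_diff_rdistrib inner_diff_right)
  then have "v \<bullet> (A *v v) - v \<bullet> (S *v v) \<le> \<mu> / 2 * (norm v)\<^sup>2"
    by (metis abs_le_D2 minus_diff_eq)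
  then show ?thesis
    using coercive[of v] by linarith
qed

lemma linear_solution_perturb:
  fixes A S :: "real^'n^'n" and x y c d :: "real^'n" and \<tau> :: real
  assumes coercive: "\<And>v. \<mu> * (norm v)\<^sup>2 \<le> v \<bullet> (A *v v)" and "0 < \<mu>"
    and close: "\<And>i j. \<bar>S $ i $ j - A $ i $ j\<bar> \<le> \<tau>" and small: "\<tau> * CARD('n)\<^sup>2 \<le> \<mu> / 2"
    and x: "A *v x = c" and y: "S *v y = d" and d: "norm (d - c) \<le> \<tau>"
  shows "norm (y - x) \<le> 2 * \<tau> * (CARD('n)\<^sup>2 * norm x + 1) / \<mu>"
proof -
  define e where "e = y - x"
  have "S *v e = (d - c) - (S - A) *v x"
    unfolding e_def using x y
    by (simp add: matrix_vector_mult_diff_distrib matrix_vector_mult_diff_rdistrib)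
  then have "e \<bullet> (S *v e) = e \<bullet> (d - c) - e \<bullet> ((S - A) *v x)"
    by (simp add: inner_diff_right)
  also have "\<dots> \<le> norm e * \<tau> + \<tau> * CARD('n)\<^sup>2 * norm e * norm x"
    using Cauchy_Schwarz_ineq2[of e "d - c"] mult_left_mono[OF d, of "norm e"]
      inner_matrix_vector_abs_le[of "S - A" \<tau> e x] close by auto
  finally have bound: "norm e * (\<mu> / 2 * norm e) \<le> norm e * (\<tau> * (CARD('n)\<^sup>2 * norm x + 1))"
    using coercive_perturb[OF coercive close small, of e]
    by (simp add: power2_eq_square algebra_simps)
  have "\<mu> / 2 * norm e \<le> \<tau> * (CARD('n)\<^sup>2 * norm x + 1)"
  proof (cases "e = 0")
    case True
    have "0 \<le> \<tau>"
      using order.trans[OF abs_ge_zero close] by blast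
    then show ?thesis
      using True by simp
  next
    case False
    then show ?thesis
      using bound by (simp add: mult_le_cancel_left_pos) (simp add: algebra_simps)
  qed
  then show ?thesis
    using \<open>0 < \<mu>\<close> unfolding e_def by (simp add: field_simps)
qed

section \<open>Square-integrable random variables and covariance\<close>

definition square_integrable :: "'a measure \<Rightarrow> ('a \<Rightarrow> real) \<Rightarrow> bool" where
  "square_integrable M f \<longleftrightarrow> f \<in> borel_measurable M \<and> integrable M (\<lambda>x. (f x)\<^sup>2)"

definition cross_covmat :: "'a measure \<Rightarrow> ('a \<Rightarrow> real^'m) \<Rightarrow> ('a \<Rightarrow> real^'n) \<Rightarrow> real^'n^'m" where
  "cross_covmat M U V = (\<chi> i j. cov M (\<lambda>\<omega>. U \<omega> $ i) (\<lambda>\<omega>. V \<omega> $ j))"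

lemma covmat_eq_cross_covmat: "covmat M U = cross_covmat M U U"
  by (simp add: covmat_def cross_covmat_def)

lemma vstack_nth [simp]: "vstack u v $ Inl i = u $ i" "vstack u v $ Inr j = v $ j"
  by (simp_all add: vstack_def)

lemma pos_def_mat_covmat_vstack_left:
  fixes U :: "'a \<Rightarrow> real^'m" and V :: "'a \<Rightarrow> real^'n"
  assumes pd: "pos_def_mat (covmat M (\<lambda>\<omega>. vstack (U \<omega>) (V \<omega>)))"
  shows "pos_def_mat (covmat M U)"
  unfolding pos_def_mat_def
proof (intro allI impI)
  fix v :: "real^'m"
  assume "v \<noteq> 0"
  then obtain i where "v $ i \<noteq> 0"
    by (metis vec_eq_iff zero_index)
  then have "vstack v (0 :: real^'n) \<noteq> 0"
    by (metis vstack_nth(1) zero_index)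
  then have "0 < vstack v 0 \<bullet> (covmat M (\<lambda>\<omega>. vstack (U \<omega>) (V \<omega>)) *v vstack v 0)"
    using pd unfolding pos_def_mat_def by blast
  also have "\<dots> = v \<bullet> (covmat M U *v v)"
  proof -
    have split: "(\<Sum>x\<in>UNIV. f x) = (\<Sum>a\<in>UNIV. f (Inl a)) + (\<Sum>b\<in>UNIV. f (Inr b))"
      for f :: "'m + 'n \<Rightarrow> real"
      using sum.Plus[of "UNIV :: 'm set" "UNIV :: 'n set" f] by (simp add: comp_def)
    show ?thesis
      by (simp add: inner_vec_def matrix_vector_mult_def covmat_def split)
  qed
  finally show "0 < v \<bullet> (covmat M U *v v)" .
qed

context prob_space
begin

lemma square_integrable_integrable: "square_integrable M f \<Longrightarrow> integrable M f"
  unfolding square_integrable_def by (auto intro: square_integrable_imp_integrable)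

lemma square_integrable_mult_integrable:
  assumes "square_integrable M f" "square_integrable M g"
  shows "integrable M (\<lambda>x. f x * g x)"
proof (rule Bochner_Integration.integrable_bound)
  show "integrable M (\<lambda>x. (f x)\<^sup>2 + (g x)\<^sup>2)" "(\<lambda>x. f x * g x) \<in> borel_measurable M"
    using assms unfolding square_integrable_def by auto
  have "\<bar>a * b\<bar> \<le> a\<^sup>2 + b\<^sup>2" for a b :: real
  proof -
    have "2 * \<bar>a\<bar> * \<bar>b\<bar> \<le> a\<^sup>2 + b\<^sup>2" "0 \<le> \<bar>a\<bar> * \<bar>b\<bar>"
      using sum_squares_bound[of "\<bar>a\<bar>" "\<bar>b\<bar>"] by simp_all
    then show ?thesis
      unfolding abs_mult by linarith
  qed
  then show "AE x in M. norm (f x * g x) \<le> norm ((f x)\<^sup>2 + (g x)\<^sup>2)"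
    by auto
qed

lemma square_integrable_const [simp]: "square_integrable M (\<lambda>x. c)"
  unfolding square_integrable_def by auto

lemma square_integrable_add:
  assumes "square_integrable M f" "square_integrable M g"
  shows "square_integrable M (\<lambda>x. f x + g x)"
proof -
  have "integrable M (\<lambda>x. (f x)\<^sup>2 + (g x)\<^sup>2 + 2 * (f x * g x))"
    using assms square_integrable_mult_integrable[OF assms]
    unfolding square_integrable_def by auto
  then show ?thesis
    using assms unfolding square_integrable_def by (auto simp: power2_sum mult.assoc)
qed

lemma square_integrable_cmult: "square_integrable M f \<Longrightarrow> square_integrable M (\<lambda>x. c * f x)"
  unfolding square_integrable_def by (auto simp: power_mult_distrib)

lemma square_integrable_diff:
  "square_integrable M f \<Longrightarrow> square_integrable M g \<Longrightarrow> square_integrable M (\<lambda>x. f x - g x)"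
  using square_integrable_add[of f "\<lambda>x. - 1 * g x"] square_integrable_cmult[of g "- 1"] by simp

lemma square_integrable_sum:
  "(\<And>m. m \<in> S \<Longrightarrow> square_integrable M (f m)) \<Longrightarrow> square_integrable M (\<lambda>x. \<Sum>m\<in>S. f m x)"
  by (induction S rule: infinite_finite_induct) (auto intro: square_integrable_add)

lemma square_integrable_inner:
  "(\<And>i. square_integrable M (\<lambda>x. U x $ i)) \<Longrightarrow> square_integrable M (\<lambda>x. u \<bullet> U x)"
  unfolding inner_vec_def by (auto intro!: square_integrable_sum square_integrable_cmult)

lemma square_integrable_component:
  fixes V :: "'a \<Rightarrow> real^'n"
  shows "V \<in> borel_measurable M \<Longrightarrow> integrable M (\<lambda>\<omega>. (V \<omega> $ i)\<^sup>2) \<Longrightarrow>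
    square_integrable M (\<lambda>\<omega>. V \<omega> $ i)"
  unfolding square_integrable_def by (simp add: measurable_compose[OF _ borel_measurable_nth])

lemma cov_commute: "cov M f g = cov M g f"
  unfolding cov_def by (simp add: mult.commute)

lemma cov_add_left:
  assumes "square_integrable M f" "square_integrable M g" "square_integrable M h"
  shows "cov M (\<lambda>x. f x + g x) h = cov M f h + cov M g h"
  using assms square_integrable_mult_integrable[OF assms(1,3)]
    square_integrable_mult_integrable[OF assms(2,3)]
  by (simp add: cov_def distrib_right square_integrable_integrable algebra_simps)

lemma cov_cmult_left: "cov M (\<lambda>x. c * f x) h = c * cov M f h"
  unfolding cov_def by (simp add: algebra_simps)

lemma cov_const_left [simp]: "cov M (\<lambda>x. c) h = 0"
  unfolding cov_def by (simp add: prob_space)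

lemma cov_diff_left:
  assumes "square_integrable M f" "square_integrable M g" "square_integrable M h"
  shows "cov M (\<lambda>x. f x - g x) h = cov M f h - cov M g h"
  using cov_add_left[OF assms(1) square_integrable_cmult[OF assms(2), of "- 1"] assms(3)]
    cov_cmult_left[of "- 1" g h]
  by simp

lemma cov_sum_left:
  assumes "\<And>m. m \<in> S \<Longrightarrow> square_integrable M (f m)" "square_integrable M h"
  shows "cov M (\<lambda>x. \<Sum>m\<in>S. f m x) h = (\<Sum>m\<in>S. cov M (f m) h)"
  using assms
  by (induction S rule: infinite_finite_induct)
    (auto simp: cov_add_left square_integrable_sum simp del: cov_const_left,
     simp_all add: cov_def prob_space)

lemma cov_affine_left:
  assumes "\<And>m. m \<in> S \<Longrightarrow> square_integrable M (Zs m)" "square_integrable M F"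
  shows "cov M (\<lambda>\<omega>. a + (\<Sum>m\<in>S. b m * Zs m \<omega>)) F = (\<Sum>m\<in>S. b m * cov M (Zs m) F)"
  using assms cov_add_left[of "\<lambda>_. a" "\<lambda>\<omega>. \<Sum>m\<in>S. b m * Zs m \<omega>" F]
  by (simp add: square_integrable_sum square_integrable_cmult cov_sum_left cov_cmult_left)

lemma cov_residual_left:
  assumes "square_integrable M U" "\<And>m. m \<in> S \<Longrightarrow> square_integrable M (Zs m)"
    "square_integrable M F"
  shows "cov M (\<lambda>\<omega>. U \<omega> - c - (\<Sum>m\<in>S. b m * Zs m \<omega>)) F
       = cov M U F - (\<Sum>m\<in>S. b m * cov M (Zs m) F)"
  using assms cov_diff_left[of U "\<lambda>\<omega>. c + (\<Sum>m\<in>S. b m * Zs m \<omega>)" F]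
  by (simp add: square_integrable_add square_integrable_sum square_integrable_cmult
      cov_affine_left diff_diff_eq)

lemma cov_inner_left:
  assumes "\<And>i. square_integrable M (\<lambda>x. U x $ i)" "square_integrable M h"
  shows "cov M (\<lambda>x. u \<bullet> U x) h = (\<Sum>i\<in>UNIV. u $ i * cov M (\<lambda>x. U x $ i) h)"
  using assms unfolding inner_vec_def
  by (simp add: cov_sum_left square_integrable_cmult cov_cmult_left)

lemma inner_cross_covmat:
  assumes U: "\<And>i. square_integrable M (\<lambda>x. U x $ i)"
    and V: "\<And>j. square_integrable M (\<lambda>x. V x $ j)"
  shows "u \<bullet> (cross_covmat M U V *v v) = cov M (\<lambda>x. u \<bullet> U x) (\<lambda>x. v \<bullet> V x)"
proof -
  have "cov M (\<lambda>x. u \<bullet> U x) (\<lambda>x. v \<bullet> V x)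
      = (\<Sum>i\<in>UNIV. u $ i * cov M (\<lambda>x. U x $ i) (\<lambda>x. v \<bullet> V x))"
    using U V by (simp add: cov_inner_left square_integrable_inner)
  also have "\<dots> = (\<Sum>i\<in>UNIV. u $ i * (\<Sum>j\<in>UNIV. v $ j * cov M (\<lambda>x. U x $ i) (\<lambda>x. V x $ j)))"
    using U V by (simp add: cov_commute[of "\<lambda>x. U x $ _"] cov_inner_left)
  also have "\<dots> = u \<bullet> (cross_covmat M U V *v v)"
    by (simp add: inner_vec_def matrix_vector_mult_def cross_covmat_def sum_distrib_left mult_ac)
  finally show ?thesis ..
qed

lemma cross_covmat_mult_nth:
  assumes "\<And>i. square_integrable M (\<lambda>x. U x $ i)" "\<And>j. square_integrable M (\<lambda>x. V x $ j)"
  shows "(cross_covmat M U V *v v) $ i = cov M (\<lambda>x. U x $ i) (\<lambda>x. v \<bullet> V x)"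
  using inner_cross_covmat[OF assms, of "axis i 1" v] by (simp add: inner_axis')

lemma cov_self_nonneg:
  assumes "square_integrable M f"
  shows "0 \<le> cov M f f"
proof -
  have "cov M f f = variance f"
    using assms variance_eq[of f] square_integrable_integrable[OF assms]
    unfolding square_integrable_def cov_def by (simp add: power2_eq_square)
  then show ?thesis
    using variance_positive[of f] by simp
qed

lemma cov_pos_of_corr_pos:
  assumes "square_integrable M f" "square_integrable M g" "corr M f g > 0"
  shows "cov M f g > 0"
proof -
  have "0 \<le> sqrt (cov M f f) * sqrt (cov M g g)"
    using assms by (simp add: cov_self_nonneg)
  then show ?thesis
    using assms(3) by (auto simp: corr_def zero_less_divide_iff)
qed

section \<open>Least squares and regression residuals\<close>

lemma least_squares_orthogonal:
  assumes f: "square_integrable M f" and h: "square_integrable M h"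
    and min: "\<And>t. integral\<^sup>L M (\<lambda>x. (f x)\<^sup>2) \<le> integral\<^sup>L M (\<lambda>x. (f x - t * h x)\<^sup>2)"
  shows "integral\<^sup>L M (\<lambda>x. f x * h x) = 0"
proof -
  define a where "a = integral\<^sup>L M (\<lambda>x. f x * h x)"
  define b where "b = integral\<^sup>L M (\<lambda>x. (h x)\<^sup>2)"
  have b0: "0 \<le> b"
    unfolding b_def by simp
  have "integral\<^sup>L M (\<lambda>x. (f x - t * h x)\<^sup>2)
      = integral\<^sup>L M (\<lambda>x. (f x)\<^sup>2) - 2 * t * a + t\<^sup>2 * b" for t
  proof -
    have "(\<lambda>x. (f x - t * h x)\<^sup>2) = (\<lambda>x. (f x)\<^sup>2 - (2 * t) * (f x * h x) + t\<^sup>2 * (h x)\<^sup>2)"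
      by (auto simp: power2_eq_square algebra_simps)
    then show ?thesis
      using f h square_integrable_mult_integrable[OF f h]
      unfolding a_def b_def square_integrable_def by simp
  qed
  then have nonneg: "0 \<le> t\<^sup>2 * b - 2 * t * a" for t
    using min[of t] by simp
  \<comment> \<open>a step towards the minimiser \<open>a / b\<close> that stays defined when \<open>b = 0\<close>\<close>
  define t where "t = a / (b + 1)"
  have "(t\<^sup>2 * b - 2 * t * a) * (b + 1)\<^sup>2 = - (a\<^sup>2 * (b + 2))"
    unfolding t_def using b0
    by (simp add: divide_simps add_nonneg_eq_0_iff) (simp add: algebra_simps power2_eq_square)
  moreover have "0 \<le> (t\<^sup>2 * b - 2 * t * a) * (b + 1)\<^sup>2"
    using nonneg[of t] by simp
  ultimately have "a\<^sup>2 * (b + 2) \<le> 0"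
    by linarith
  then show ?thesis
    using b0 unfolding a_def[symmetric] by (simp add: mult_le_0_iff)
qed

lemma least_squares_mean_eq_0:
  assumes "square_integrable M f"
    and "\<And>t. integral\<^sup>L M (\<lambda>x. (f x)\<^sup>2) \<le> integral\<^sup>L M (\<lambda>x. (f x - t)\<^sup>2)"
  shows "integral\<^sup>L M f = 0"
  using least_squares_orthogonal[OF assms(1) square_integrable_const[of 1]] assms(2) by simp

lemma least_squares_cov_eq_0:
  assumes f: "square_integrable M f" and h: "square_integrable M h"
    and min_const: "\<And>t. integral\<^sup>L M (\<lambda>x. (f x)\<^sup>2) \<le> integral\<^sup>L M (\<lambda>x. (f x - t)\<^sup>2)"
    and min_h: "\<And>t. integral\<^sup>L M (\<lambda>x. (f x)\<^sup>2) \<le> integral\<^sup>L M (\<lambda>x. (f x - t * h x)\<^sup>2)"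
  shows "cov M h f = 0"
  using least_squares_mean_eq_0[OF f min_const] least_squares_orthogonal[OF f h min_h]
  by (simp add: cov_def mult.commute)

lemma least_squares_normal_equations:
  fixes Z :: "'a \<Rightarrow> real^'p" and X :: "'a \<Rightarrow> real^'d"
  assumes Y: "square_integrable M Y" and Z: "\<And>l. square_integrable M (\<lambda>\<omega>. Z \<omega> $ l)"
    and X: "\<And>j. square_integrable M (\<lambda>\<omega>. X \<omega> $ j)"
    and min: "\<And>a bZ bX. integral\<^sup>L M (\<lambda>\<omega>. (Y \<omega> - \<alpha> - Z \<omega> \<bullet> \<beta>Z - X \<omega> \<bullet> \<beta>X)\<^sup>2)
                       \<le> integral\<^sup>L M (\<lambda>\<omega>. (Y \<omega> - a - Z \<omega> \<bullet> bZ - X \<omega> \<bullet> bX)\<^sup>2)"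
  shows "covmat M Z *v \<beta>Z + cross_covmat M Z X *v \<beta>X = (\<chi> l. cov M (\<lambda>\<omega>. Z \<omega> $ l) Y)"
proof -
  define \<epsilon> where "\<epsilon> = (\<lambda>\<omega>. Y \<omega> - \<alpha> - Z \<omega> \<bullet> \<beta>Z - X \<omega> \<bullet> \<beta>X)"
  have sqZ: "square_integrable M (\<lambda>\<omega>. Z \<omega> \<bullet> \<beta>Z)" and sqX: "square_integrable M (\<lambda>\<omega>. X \<omega> \<bullet> \<beta>X)"
    using square_integrable_inner[OF Z] square_integrable_inner[OF X]
    by (simp_all add: inner_commute)
  have sq\<epsilon>: "square_integrable M \<epsilon>"
    unfolding \<epsilon>_def using Y sqZ sqX by (intro square_integrable_diff) simp_all
  have orth: "cov M (\<lambda>\<omega>. Z \<omega> $ l) \<epsilon> = 0" for l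
  proof (rule least_squares_cov_eq_0[OF sq\<epsilon> Z])
    show "integral\<^sup>L M (\<lambda>x. (\<epsilon> x)\<^sup>2) \<le> integral\<^sup>L M (\<lambda>x. (\<epsilon> x - t)\<^sup>2)" for t
      using min[of "\<alpha> + t" \<beta>Z \<beta>X] by (simp add: \<epsilon>_def algebra_simps)
    show "integral\<^sup>L M (\<lambda>x. (\<epsilon> x)\<^sup>2) \<le> integral\<^sup>L M (\<lambda>x. (\<epsilon> x - t * Z x $ l)\<^sup>2)" for t
      using min[of \<alpha> "\<beta>Z + t *\<^sub>R axis l 1" \<beta>X]
      by (simp add: \<epsilon>_def inner_add_right inner_axis algebra_simps)
  qed
  show ?thesis
  proof (subst vec_eq_iff, intro allI)
    fix l
    have "cov M Y (\<lambda>\<omega>. Z \<omega> $ l)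
        = cov M (\<lambda>\<omega>. (Z \<omega> \<bullet> \<beta>Z + X \<omega> \<bullet> \<beta>X + \<epsilon> \<omega>) + \<alpha>) (\<lambda>\<omega>. Z \<omega> $ l)"
      by (simp add: \<epsilon>_def)
    also have "\<dots> = cov M (\<lambda>\<omega>. Z \<omega> \<bullet> \<beta>Z) (\<lambda>\<omega>. Z \<omega> $ l) + cov M (\<lambda>\<omega>. X \<omega> \<bullet> \<beta>X) (\<lambda>\<omega>. Z \<omega> $ l)"
      using sqZ sqX sq\<epsilon> Z orth
      by (simp add: cov_add_left square_integrable_add cov_commute[of \<epsilon>])
    finally show "(covmat M Z *v \<beta>Z + cross_covmat M Z X *v \<beta>X) $ l
        = (\<chi> l. cov M (\<lambda>\<omega>. Z \<omega> $ l) Y) $ l"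
      using Z X
      by (simp add: covmat_eq_cross_covmat cross_covmat_mult_nth cov_commute inner_commute)
  qed
qed

lemma square_integrable_residual:
  assumes "square_integrable M U" "\<And>m. m \<in> S \<Longrightarrow> square_integrable M (Zs m)"
  shows "square_integrable M (\<lambda>\<omega>. U \<omega> - c - (\<Sum>m\<in>S. b m * Zs m \<omega>))"
  using assms by (intro square_integrable_diff square_integrable_sum square_integrable_cmult) auto

lemma square_integrable_lin_resid:
  assumes "is_lin_resid M U Zs S R" "square_integrable M U" "\<And>m. m \<in> S \<Longrightarrow> square_integrable M (Zs m)"
  shows "square_integrable M R"
  using assms unfolding is_lin_resid_def by (auto intro: square_integrable_residual)

lemma lin_resid_orthogonal:
  assumes R: "is_lin_resid M U Zs S R" and "finite S"
    and U: "square_integrable M U" and Zs: "\<And>m. m \<in> S \<Longrightarrow> square_integrable M (Zs m)"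
  shows "integral\<^sup>L M R = 0" "\<And>m. m \<in> S \<Longrightarrow> cov M (Zs m) R = 0"
proof -
  obtain c b where R_eq: "R = (\<lambda>\<omega>. U \<omega> - c - (\<Sum>m\<in>S. b m * Zs m \<omega>))"
    and min: "\<And>c' b'. integral\<^sup>L M (\<lambda>\<omega>. (U \<omega> - c - (\<Sum>m\<in>S. b m * Zs m \<omega>))\<^sup>2)
                \<le> integral\<^sup>L M (\<lambda>\<omega>. (U \<omega> - c' - (\<Sum>m\<in>S. b' m * Zs m \<omega>))\<^sup>2)"
    using R unfolding is_lin_resid_def by blast
  have sqR: "square_integrable M R"
    unfolding R_eq using U Zs by (rule square_integrable_residual)
  have min_const: "integral\<^sup>L M (\<lambda>x. (R x)\<^sup>2) \<le> integral\<^sup>L M (\<lambda>x. (R x - t)\<^sup>2)" for t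
    using min[of "c + t" b] unfolding R_eq by (simp add: algebra_simps)
  then show "integral\<^sup>L M R = 0"
    by (rule least_squares_mean_eq_0[OF sqR])
  fix m assume m: "m \<in> S"
  have "integral\<^sup>L M (\<lambda>x. (R x)\<^sup>2) \<le> integral\<^sup>L M (\<lambda>x. (R x - t * Zs m x)\<^sup>2)" for t
  proof -
    have "(\<Sum>m'\<in>S. (b(m := b m + t)) m' * Zs m' \<omega>) = (\<Sum>m'\<in>S. b m' * Zs m' \<omega>) + t * Zs m \<omega>" for \<omega>
      using m \<open>finite S\<close> by (simp add: sum.remove algebra_simps)
    then show ?thesis
      using min[of c "b(m := b m + t)"] unfolding R_eq by (simp add: algebra_simps)
  qed
  then show "cov M (Zs m) R = 0"
    by (rule least_squares_cov_eq_0[OF sqR Zs[OF m] min_const])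
qed

lemma lin_resid_of_orthogonal:
  assumes R_eq: "R = (\<lambda>\<omega>. U \<omega> - c - (\<Sum>m\<in>S. b m * Zs m \<omega>))"
    and U: "square_integrable M U" and Zs: "\<And>m. m \<in> S \<Longrightarrow> square_integrable M (Zs m)"
    and mean: "integral\<^sup>L M R = 0" and orth: "\<And>m. m \<in> S \<Longrightarrow> cov M (Zs m) R = 0"
  shows "is_lin_resid M U Zs S R"
  unfolding is_lin_resid_def
proof (intro exI conjI allI)
  show "R = (\<lambda>\<omega>. U \<omega> - c - (\<Sum>m\<in>S. b m * Zs m \<omega>))"
    by (fact R_eq)
  fix c' b'
  \<comment> \<open>Pythagoras: the competitor is \<open>R + D\<close> with \<open>D\<close> affine in the regressors,
    hence orthogonal to \<open>R\<close>\<close>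
  define D where "D = (\<lambda>\<omega>. (c - c') + (\<Sum>m\<in>S. (b m - b' m) * Zs m \<omega>))"
  have sqR: "square_integrable M R"
    unfolding R_eq using U Zs by (rule square_integrable_residual)
  have sqD: "square_integrable M D"
    unfolding D_def using Zs
    by (intro square_integrable_add square_integrable_sum square_integrable_cmult) auto
  have "integral\<^sup>L M (\<lambda>\<omega>. D \<omega> * R \<omega>) = cov M D R"
    using mean by (simp add: cov_def)
  also have "\<dots> = 0"
    unfolding D_def using Zs sqR orth by (simp add: cov_affine_left)
  finally have DR: "integral\<^sup>L M (\<lambda>\<omega>. D \<omega> * R \<omega>) = 0" .
  have "(\<lambda>\<omega>. (U \<omega> - c' - (\<Sum>m\<in>S. b' m * Zs m \<omega>))\<^sup>2)
      = (\<lambda>\<omega>. (R \<omega>)\<^sup>2 + 2 * (D \<omega> * R \<omega>) + (D \<omega>)\<^sup>2)"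
    unfolding R_eq D_def by (auto simp: power2_eq_square sum_subtractf algebra_simps)
  then have "integral\<^sup>L M (\<lambda>\<omega>. (U \<omega> - c' - (\<Sum>m\<in>S. b' m * Zs m \<omega>))\<^sup>2)
      = integral\<^sup>L M (\<lambda>\<omega>. (R \<omega>)\<^sup>2) + integral\<^sup>L M (\<lambda>\<omega>. (D \<omega>)\<^sup>2)"
    using sqR sqD square_integrable_mult_integrable[OF sqD sqR] DR
    unfolding square_integrable_def by simp
  moreover have "0 \<le> integral\<^sup>L M (\<lambda>\<omega>. (D \<omega>)\<^sup>2)"
    by simp
  moreover have "(\<lambda>\<omega>. (U \<omega> - c - (\<Sum>m\<in>S. b m * Zs m \<omega>))\<^sup>2) = (\<lambda>\<omega>. (R \<omega>)\<^sup>2)"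
    by (simp add: R_eq)
  ultimately show "integral\<^sup>L M (\<lambda>\<omega>. (U \<omega> - c - (\<Sum>m\<in>S. b m * Zs m \<omega>))\<^sup>2)
      \<le> integral\<^sup>L M (\<lambda>\<omega>. (U \<omega> - c' - (\<Sum>m\<in>S. b' m * Zs m \<omega>))\<^sup>2)"
    by simp
qed

lemma lin_resid_exists:
  fixes Zs :: "'i::finite \<Rightarrow> 'a \<Rightarrow> real"
  assumes U: "square_integrable M U" and Zs: "\<And>m. square_integrable M (Zs m)"
    and pd: "pos_def_mat (covmat M (\<lambda>\<omega>. \<chi> m. Zs m \<omega>))"
  shows "\<exists>R. is_lin_resid M U Zs S R"
proof -
  obtain b :: "real^'i" where b: "\<And>l. l \<in> S \<Longrightarrow>
      (\<Sum>m\<in>S. covmat M (\<lambda>\<omega>. \<chi> m. Zs m \<omega>) $ l $ m * b $ m) = (\<chi> l. cov M U (Zs l)) $ l"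
    using pos_def_mat_solvable_on[OF pd] by blast
  define c where "c = integral\<^sup>L M U - (\<Sum>m\<in>S. b $ m * integral\<^sup>L M (Zs m))"
  define R where "R = (\<lambda>\<omega>. U \<omega> - c - (\<Sum>m\<in>S. b $ m * Zs m \<omega>))"
  show ?thesis
  proof (intro exI lin_resid_of_orthogonal)
    show "R = (\<lambda>\<omega>. U \<omega> - c - (\<Sum>m\<in>S. b $ m * Zs m \<omega>))"
      by (fact R_def)
    show "integral\<^sup>L M R = 0"
      using U Zs unfolding R_def c_def
      by (simp add: square_integrable_integrable integral_sum prob_space)
    show "cov M (Zs l) R = 0" if "l \<in> S" for l
    proof -
      have "cov M R (Zs l) = cov M U (Zs l) - (\<Sum>m\<in>S. b $ m * cov M (Zs m) (Zs l))"
        unfolding R_def using U Zs by (simp add: cov_residual_left)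
      also have "\<dots> = 0"
        using b[OF that] by (simp add: covmat_def cov_commute[of "Zs l"] mult.commute)
      finally show ?thesis
        by (simp add: cov_commute)
    qed
  qed (use U Zs in auto)
qed

lemma cov_lin_resid_left:
  assumes R: "is_lin_resid M V Zs S R" and V: "square_integrable M V"
    and Zs: "\<And>m. m \<in> S \<Longrightarrow> square_integrable M (Zs m)" and F: "square_integrable M F"
    and orth: "\<And>m. m \<in> S \<Longrightarrow> cov M (Zs m) F = 0"
  shows "cov M R F = cov M V F"
proof -
  obtain c b where "R = (\<lambda>\<omega>. V \<omega> - c - (\<Sum>m\<in>S. b m * Zs m \<omega>))"
    using R unfolding is_lin_resid_def by blast
  then show ?thesis
    using V Zs F orth by (simp add: cov_residual_left)
qed

lemma lin_resid_normal_equations: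
  fixes Z :: "'a \<Rightarrow> real^'p"
  assumes R: "is_lin_resid M U (\<lambda>m \<omega>. Z \<omega> $ m) UNIV (\<lambda>\<omega>. U \<omega> - c - (\<Sum>m\<in>UNIV. b $ m * Z \<omega> $ m))"
    and U: "square_integrable M U" and Z: "\<And>m. square_integrable M (\<lambda>\<omega>. Z \<omega> $ m)"
  shows "covmat M Z *v b = (\<chi> k. cov M (\<lambda>\<omega>. Z \<omega> $ k) U)"
proof (subst vec_eq_iff, intro allI)
  fix k
  have "0 = cov M (\<lambda>\<omega>. U \<omega> - c - (\<Sum>m\<in>UNIV. b $ m * Z \<omega> $ m)) (\<lambda>\<omega>. Z \<omega> $ k)"
    using lin_resid_orthogonal(2)[OF R _ U Z, of k] by (simp add: cov_commute)
  also have "\<dots> = cov M U (\<lambda>\<omega>. Z \<omega> $ k) - (\<Sum>m\<in>UNIV. b $ m * cov M (\<lambda>\<omega>. Z \<omega> $ m) (\<lambda>\<omega>. Z \<omega> $ k))"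
    by (rule cov_residual_left[OF U Z Z])
  finally show "(covmat M Z *v b) $ k = (\<chi> k. cov M (\<lambda>\<omega>. Z \<omega> $ k) U) $ k"
    by (simp add: matrix_vector_mult_def covmat_def mult.commute cov_commute[of _ "\<lambda>\<omega>. Z \<omega> $ k"])
qed

section \<open>Sign of the omitted-variable bias\<close>

lemma lin_resid_eq_inner:
  fixes Z :: "'a \<Rightarrow> real^'p"
  assumes "is_lin_resid M (\<lambda>\<omega>. Z \<omega> $ k) (\<lambda>m \<omega>. Z \<omega> $ m) (- {k}) R"
  obtains u c where "u $ k = 1" "R = (\<lambda>\<omega>. u \<bullet> Z \<omega> - c)"
proof -
  obtain c w where R_eq: "R = (\<lambda>\<omega>. Z \<omega> $ k - c - (\<Sum>m\<in>- {k}. w m * Z \<omega> $ m))"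
    using assms unfolding is_lin_resid_def by blast
  define u :: "real^'p" where "u = (\<chi> m. if m = k then 1 else - w m)"
  have "u \<bullet> Z \<omega> = u $ k * Z \<omega> $ k + (\<Sum>m\<in>- {k}. u $ m * Z \<omega> $ m)" for \<omega>
    unfolding inner_vec_def
    by (subst sum.remove[of UNIV k]) (simp_all add: Compl_eq_Diff_UNIV mult.commute)
  then have "R = (\<lambda>\<omega>. u \<bullet> Z \<omega> - c)"
    unfolding R_eq by (simp add: u_def sum_negf fun_eq_iff)
  then show ?thesis
    using that[of u c] by (simp add: u_def)
qed

lemma cov_inner_right_orthogonal:
  assumes R: "square_integrable M R" and Z: "\<And>m. square_integrable M (\<lambda>\<omega>. Z \<omega> $ m)"
    and orth: "\<And>m. m \<noteq> k \<Longrightarrow> cov M (\<lambda>\<omega>. Z \<omega> $ m) R = 0"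
  shows "cov M R (\<lambda>\<omega>. v \<bullet> Z \<omega>) = v $ k * cov M R (\<lambda>\<omega>. Z \<omega> $ k)"
proof -
  have "cov M R (\<lambda>\<omega>. v \<bullet> Z \<omega>) = (\<Sum>m\<in>UNIV. v $ m * cov M (\<lambda>\<omega>. Z \<omega> $ m) R)"
    using Z R by (simp add: cov_commute[of R] cov_inner_left)
  also have "\<dots> = v $ k * cov M (\<lambda>\<omega>. Z \<omega> $ k) R"
    using orth by (subst sum.remove[of UNIV k]) auto
  finally show ?thesis
    by (simp add: cov_commute)
qed

lemma cov_lin_resid_pos_of_partial_corr:
  fixes Zs :: "'i::finite \<Rightarrow> 'a \<Rightarrow> real"
  assumes U: "square_integrable M U" and V: "square_integrable M V"
    and Zs: "\<And>m. square_integrable M (Zs m)" and pd: "pos_def_mat (covmat M (\<lambda>\<omega>. \<chi> m. Zs m \<omega>))"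
    and pcorr: "0 < partial_corr M U V Zs S"
  shows "0 < cov M (SOME R. is_lin_resid M U Zs S R) V"
proof -
  define R where "R = (SOME R. is_lin_resid M U Zs S R)"
  define R' where "R' = (SOME R. is_lin_resid M V Zs S R)"
  have R: "is_lin_resid M U Zs S R"
    unfolding R_def using lin_resid_exists[OF U Zs pd] by (rule someI_ex)
  have R': "is_lin_resid M V Zs S R'"
    unfolding R'_def using lin_resid_exists[OF V Zs pd] by (rule someI_ex)
  have sqR: "square_integrable M R" and sqR': "square_integrable M R'"
    using square_integrable_lin_resid[OF R U Zs] square_integrable_lin_resid[OF R' V Zs] by simp_all
  have "0 < cov M R R'"
    using pcorr
    by (intro cov_pos_of_corr_pos[OF sqR sqR']) (simp add: partial_corr_def R_def R'_def)
  also have "cov M R R' = cov M V R"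
    using cov_lin_resid_left[OF R' V Zs sqR] lin_resid_orthogonal(2)[OF R _ U Zs]
    by (simp add: cov_commute[of R])
  finally show ?thesis
    by (simp add: R_def cov_commute)
qed

lemma omitted_regressor_bias_nonpos:
  fixes Z :: "'a \<Rightarrow> real^'p" and X :: "'a \<Rightarrow> real^'d"
  assumes Z: "\<And>m. square_integrable M (\<lambda>\<omega>. Z \<omega> $ m)"
    and X: "\<And>j. square_integrable M (\<lambda>\<omega>. X \<omega> $ j)"
    and pd: "pos_def_mat (covmat M Z)"
    and normal: "covmat M Z *v g = cross_covmat M Z X *v \<beta>"
    and nonpos: "\<And>j. \<beta> $ j \<le> 0"
    and pcorr: "\<And>j. partial_corr M (\<lambda>\<omega>. Z \<omega> $ k) (\<lambda>\<omega>. X \<omega> $ j) (\<lambda>m \<omega>. Z \<omega> $ m) (- {k}) > 0"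
  shows "g $ k \<le> 0"
proof -
  define R where "R = (SOME R. is_lin_resid M (\<lambda>\<omega>. Z \<omega> $ k) (\<lambda>m \<omega>. Z \<omega> $ m) (- {k}) R)"
  have "\<exists>R. is_lin_resid M (\<lambda>\<omega>. Z \<omega> $ k) (\<lambda>m \<omega>. Z \<omega> $ m) (- {k}) R"
    using lin_resid_exists[where Zs = "\<lambda>m \<omega>. Z \<omega> $ m", OF Z Z] pd by simp
  then have R: "is_lin_resid M (\<lambda>\<omega>. Z \<omega> $ k) (\<lambda>m \<omega>. Z \<omega> $ m) (- {k}) R"
    unfolding R_def by (rule someI_ex)
  have sqR: "square_integrable M R"
    using square_integrable_lin_resid[OF R Z Z] .
  have cov_R_Z: "cov M R (\<lambda>\<omega>. v \<bullet> Z \<omega>) = v $ k * cov M R (\<lambda>\<omega>. Z \<omega> $ k)" for v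
    using lin_resid_orthogonal(2)[OF R _ Z Z] by (intro cov_inner_right_orthogonal[OF sqR Z]) simp
  obtain u c where u: "u $ k = 1" "R = (\<lambda>\<omega>. u \<bullet> Z \<omega> - c)"
    using lin_resid_eq_inner[OF R] .
  then have cov_u: "cov M (\<lambda>\<omega>. u \<bullet> Z \<omega>) F = cov M R F" if "square_integrable M F" for F
    using cov_add_left[OF sqR square_integrable_const[of c] that] u(2) by simp
  have "g $ k * cov M R (\<lambda>\<omega>. Z \<omega> $ k) = u \<bullet> (covmat M Z *v g)"
    using Z sqR
    by (simp add: covmat_eq_cross_covmat inner_cross_covmat cov_u square_integrable_inner cov_R_Z)
  also have "\<dots> = cov M R (\<lambda>\<omega>. \<beta> \<bullet> X \<omega>)"
    using Z X by (simp add: normal inner_cross_covmat cov_u square_integrable_inner)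
  also have "\<dots> = (\<Sum>j\<in>UNIV. \<beta> $ j * cov M R (\<lambda>\<omega>. X \<omega> $ j))"
    using X sqR by (simp add: cov_commute[of R] cov_inner_left)
  also have "\<dots> \<le> 0"
    using nonpos cov_lin_resid_pos_of_partial_corr[OF Z X Z _ pcorr] pd
    by (intro sum_nonpos mult_nonpos_nonneg) (auto simp: R_def intro: less_imp_le)
  finally have "g $ k * cov M R (\<lambda>\<omega>. Z \<omega> $ k) \<le> 0" .
  moreover have "0 < cov M R (\<lambda>\<omega>. Z \<omega> $ k)"
  proof -
    have "u \<noteq> 0"
      using u(1) by auto
    then have "0 < u \<bullet> (covmat M Z *v u)"
      using pd unfolding pos_def_mat_def by blast
    also have "\<dots> = cov M R (\<lambda>\<omega>. Z \<omega> $ k)"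
      using Z sqR u(1)
      by (simp add: covmat_eq_cross_covmat inner_cross_covmat cov_u square_integrable_inner cov_R_Z)
    finally show ?thesis .
  qed
  ultimately show ?thesis
    by (simp add: mult_le_0_iff)
qed

lemma short_regression_bias_nonpos:
  fixes Z :: "'a \<Rightarrow> real^'p" and X :: "'a \<Rightarrow> real^'d"
  assumes Y: "square_integrable M Y" and Z: "\<And>l. square_integrable M (\<lambda>\<omega>. Z \<omega> $ l)"
    and X: "\<And>j. square_integrable M (\<lambda>\<omega>. X \<omega> $ j)" and pd: "pos_def_mat (covmat M Z)"
    and min: "\<And>a bZ bX. integral\<^sup>L M (\<lambda>\<omega>. (Y \<omega> - \<alpha> - Z \<omega> \<bullet> \<beta>Z - X \<omega> \<bullet> \<beta>X)\<^sup>2)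
                       \<le> integral\<^sup>L M (\<lambda>\<omega>. (Y \<omega> - a - Z \<omega> \<bullet> bZ - X \<omega> \<bullet> bX)\<^sup>2)"
    and b: "covmat M Z *v b = (\<chi> l. cov M (\<lambda>\<omega>. Z \<omega> $ l) Y)"
    and nonpos: "\<And>j. \<beta>X $ j \<le> 0"
    and pcorr: "\<And>j. partial_corr M (\<lambda>\<omega>. Z \<omega> $ k) (\<lambda>\<omega>. X \<omega> $ j) (\<lambda>m \<omega>. Z \<omega> $ m) (- {k}) > 0"
  shows "(b - \<beta>Z) $ k \<le> 0"
proof (rule omitted_regressor_bias_nonpos[OF Z X pd _ nonpos pcorr])
  show "covmat M Z *v (b - \<beta>Z) = cross_covmat M Z X *v \<beta>X"
    unfolding matrix_vector_mult_diff_distrib b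
      least_squares_normal_equations[OF Y Z X min, symmetric]
    by simp
qed

end

section \<open>The empirical distribution and the OLS slope\<close>

definition empirical :: "nat \<Rightarrow> nat measure" where
  "empirical N = measure_pmf (pmf_of_set {..<N})"

lemma prob_space_empirical: "prob_space (empirical N)"
  by (simp add: empirical_def prob_space_measure_pmf)

lemma integral_empirical: "0 < N \<Longrightarrow> integral\<^sup>L (empirical N) f = (\<Sum>i<N. f i) / N"
  unfolding empirical_def by (subst integral_pmf_of_set) auto

lemma square_integrable_empirical:
  assumes "0 < N"
  shows "square_integrable (empirical N) f"
proof -
  have "finite (set_pmf (pmf_of_set {..<N}))"
    using assms by (subst set_pmf_of_set) auto
  then show ?thesis
    unfolding square_integrable_def empirical_def by (simp add: integrable_measure_pmf_finite)
qed

lemma cov_empirical: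
  "0 < N \<Longrightarrow> cov (empirical N) f g = (\<Sum>i<N. f i * g i) / N - (\<Sum>i<N. f i) / N * ((\<Sum>i<N. g i) / N)"
  by (simp add: cov_def integral_empirical)

lemma ols_slope_lin_resid:
  fixes y :: "nat \<Rightarrow> real" and z :: "nat \<Rightarrow> real^'p"
  assumes N: "0 < N" and pd: "pos_def_mat (covmat (empirical N) z)"
  obtains a where "is_lin_resid (empirical N) y (\<lambda>m i. z i $ m) UNIV
    (\<lambda>i. y i - a - (\<Sum>m\<in>UNIV. ols_slope N y z $ m * z i $ m))"
proof -
  interpret prob_space "empirical N"
    by (rule prob_space_empirical)
  define LS where "LS = (\<lambda>a (b :: 'p \<Rightarrow> real).
    integral\<^sup>L (empirical N) (\<lambda>i. (y i - a - (\<Sum>m\<in>UNIV. b m * z i $ m))\<^sup>2))"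
  define minimal where "minimal = (\<lambda>(a, b :: real^'p). \<forall>a' b'.
      (\<Sum>i<N. (y i - a - z i \<bullet> b)\<^sup>2) \<le> (\<Sum>i<N. (y i - a' - z i \<bullet> b')\<^sup>2))"
  have minimal_iff: "minimal (a, b) \<longleftrightarrow> (\<forall>a' b'. LS a (\<lambda>m. b $ m) \<le> LS a' (\<lambda>m. b' $ m))" for a b
  proof -
    have "(\<Sum>i<N. (y i - a - z i \<bullet> b)\<^sup>2) = N * LS a (\<lambda>m. b $ m)" for a b
      using N by (simp add: LS_def integral_empirical inner_vec_def mult.commute)
    then show ?thesis
      using N by (simp add: minimal_def mult_le_cancel_left_pos)
  qed
  have "\<exists>p. minimal p"
  proof -
    obtain R where "is_lin_resid (empirical N) y (\<lambda>m i. z i $ m) UNIV R"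
      using lin_resid_exists[where Zs = "\<lambda>m i. z i $ m", OF square_integrable_empirical[OF N]
          square_integrable_empirical[OF N]] pd by auto
    then obtain c b where "\<And>c' b'. LS c b \<le> LS c' b'"
      unfolding is_lin_resid_def LS_def by blast
    then have "minimal (c, \<chi> m. b m)"
      unfolding minimal_iff by (simp add: vec_lambda_inverse)
    then show ?thesis ..
  qed
  then have "minimal (SOME p. minimal p)"
    by (rule someI_ex)
  moreover have "ols_slope N y z = snd (SOME p. minimal p)"
    unfolding ols_slope_def minimal_def ..
  ultimately obtain a where min: "minimal (a, ols_slope N y z)"
    by (metis prod.collapse)
  have "LS a (\<lambda>m. ols_slope N y z $ m) \<le> LS c' b'" for c' b'
    using min[unfolded minimal_iff, rule_format, of c' "\<chi> m. b' m"]
    by (simp add: vec_lambda_inverse)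
  then have "is_lin_resid (empirical N) y (\<lambda>m i. z i $ m) UNIV
      (\<lambda>i. y i - a - (\<Sum>m\<in>UNIV. ols_slope N y z $ m * z i $ m))"
    unfolding is_lin_resid_def LS_def
    by (intro exI[of _ a] exI[of _ "\<lambda>m. ols_slope N y z $ m"] conjI allI refl)
  then show ?thesis
    by (rule that)
qed

lemma ols_slope_normal_equations:
  fixes y :: "nat \<Rightarrow> real" and z :: "nat \<Rightarrow> real^'p"
  assumes N: "0 < N" and pd: "pos_def_mat (covmat (empirical N) z)"
  shows "covmat (empirical N) z *v ols_slope N y z = (\<chi> k. cov (empirical N) (\<lambda>i. z i $ k) y)"
proof -
  interpret prob_space "empirical N"
    by (rule prob_space_empirical)
  obtain a where "is_lin_resid (empirical N) y (\<lambda>m i. z i $ m) UNIV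
      (\<lambda>i. y i - a - (\<Sum>m\<in>UNIV. ols_slope N y z $ m * z i $ m))"
    using ols_slope_lin_resid[OF N pd] .
  then show ?thesis
    by (rule lin_resid_normal_equations) (simp_all add: square_integrable_empirical[OF N])
qed

lemma abs_mult_diff_le:
  fixes x y a b :: real
  assumes "\<bar>x - a\<bar> \<le> \<eta>" "\<bar>y - b\<bar> \<le> \<eta>" "\<eta> \<le> 1" "\<bar>a\<bar> \<le> B" "\<bar>b\<bar> \<le> B"
  shows "\<bar>x * y - a * b\<bar> \<le> \<eta> * (2 * B + 1)"
proof -
  have "\<bar>x * y - a * b\<bar> = \<bar>(x - a) * y + a * (y - b)\<bar>"
    by (simp add: algebra_simps)
  also have "\<dots> \<le> \<bar>x - a\<bar> * \<bar>y\<bar> + \<bar>a\<bar> * \<bar>y - b\<bar>"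
    using abs_triangle_ineq[of "(x - a) * y" "a * (y - b)"] by (simp add: abs_mult)
  also have "\<dots> \<le> \<eta> * (B + 1) + B * \<eta>"
    using assms by (intro add_mono mult_mono) auto
  finally show ?thesis
    by (simp add: algebra_simps)
qed

lemma empirical_cov_approx:
  assumes N: "0 < N" and f: "\<bar>(\<Sum>i<N. f i) / N - mf\<bar> \<le> \<eta>" and g: "\<bar>(\<Sum>i<N. g i) / N - mg\<bar> \<le> \<eta>"
    and fg: "\<bar>(\<Sum>i<N. f i * g i) / N - mfg\<bar> \<le> \<eta>"
    and "\<eta> \<le> 1" and "\<bar>mf\<bar> \<le> B" and "\<bar>mg\<bar> \<le> B"
  shows "\<bar>cov (empirical N) f g - (mfg - mf * mg)\<bar> \<le> \<eta> * (2 * B + 2)"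
  using abs_mult_diff_le[OF f g assms(5-7)] fg
  by (simp add: cov_empirical[OF N] abs_le_iff algebra_simps)

lemma ols_slope_dist_le:
  fixes y :: "nat \<Rightarrow> real" and z :: "nat \<Rightarrow> real^'p" and A :: "real^'p^'p" and \<tau> :: real
  assumes N: "0 < N" and coercive: "\<And>v. \<mu> * (norm v)\<^sup>2 \<le> v \<bullet> (A *v v)" and "0 < \<mu>"
    and b: "A *v b = c" and small: "\<tau> * CARD('p)\<^sup>2 \<le> \<mu> / 2"
    and close_A: "\<And>k l. \<bar>cov (empirical N) (\<lambda>i. z i $ k) (\<lambda>i. z i $ l) - A $ k $ l\<bar> \<le> \<tau>"
    and close_c: "norm ((\<chi> k. cov (empirical N) (\<lambda>i. z i $ k) y) - c) \<le> \<tau>"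
  shows "norm (ols_slope N y z - b) \<le> 2 * \<tau> * (CARD('p)\<^sup>2 * norm b + 1) / \<mu>"
proof -
  have close: "\<bar>covmat (empirical N) z $ k $ l - A $ k $ l\<bar> \<le> \<tau>" for k l
    using close_A by (simp add: covmat_def)
  have "pos_def_mat (covmat (empirical N) z)"
    unfolding pos_def_mat_def
  proof (intro allI impI)
    fix v :: "real^'p"
    assume "v \<noteq> 0"
    then have "0 < \<mu> / 2 * (norm v)\<^sup>2"
      using \<open>0 < \<mu>\<close> by simp
    also have "\<dots> \<le> v \<bullet> (covmat (empirical N) z *v v)"
      by (rule coercive_perturb[OF coercive close small])
    finally show "0 < v \<bullet> (covmat (empirical N) z *v v)" .
  qed
  then have "covmat (empirical N) z *v ols_slope N y z = (\<chi> k. cov (empirical N) (\<lambda>i. z i $ k) y)"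
    by (rule ols_slope_normal_equations[OF N])
  from linear_solution_perturb[OF coercive \<open>0 < \<mu>\<close> close small b this close_c]
  show ?thesis .
qed

lemma ols_slope_dist_le_of_moments:
  fixes y :: "nat \<Rightarrow> real" and z :: "nat \<Rightarrow> real^'p" and \<eta> C :: real
    and my :: real and mz mzy :: "real^'p" and mzz :: "real^'p^'p"
  assumes N: "0 < N"
    and coercive: "\<And>v. \<mu> * (norm v)\<^sup>2 \<le> v \<bullet> ((\<chi> k l. mzz $ k $ l - mz $ k * mz $ l) *v v)"
    and "0 < \<mu>" and b: "(\<chi> k l. mzz $ k $ l - mz $ k * mz $ l) *v b = (\<chi> k. mzy $ k - mz $ k * my)"
    and y_mean: "\<bar>(\<Sum>i<N. y i) / N - my\<bar> \<le> \<eta>"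
    and z_mean: "\<And>k. \<bar>(\<Sum>i<N. z i $ k) / N - mz $ k\<bar> \<le> \<eta>"
    and zz_mean: "\<And>k l. \<bar>(\<Sum>i<N. z i $ k * z i $ l) / N - mzz $ k $ l\<bar> \<le> \<eta>"
    and zy_mean: "\<And>k. \<bar>(\<Sum>i<N. z i $ k * y i) / N - mzy $ k\<bar> \<le> \<eta>"
    and "\<eta> \<le> 1" and C: "\<bar>my\<bar> \<le> C" "\<And>k. \<bar>mz $ k\<bar> \<le> C"
    and small: "CARD('p) * (\<eta> * (2 * C + 2)) * CARD('p)\<^sup>2 \<le> \<mu> / 2"
  shows "norm (ols_slope N y z - b)
    \<le> 2 * (CARD('p) * (\<eta> * (2 * C + 2))) * (CARD('p)\<^sup>2 * norm b + 1) / \<mu>"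
proof -
  have zz: "\<bar>cov (empirical N) (\<lambda>i. z i $ k) (\<lambda>i. z i $ l) - (mzz $ k $ l - mz $ k * mz $ l)\<bar>
      \<le> \<eta> * (2 * C + 2)" for k l
    using z_mean zz_mean \<open>\<eta> \<le> 1\<close> C by (intro empirical_cov_approx[OF N])
  have zy: "\<bar>cov (empirical N) (\<lambda>i. z i $ k) y - (mzy $ k - mz $ k * my)\<bar> \<le> \<eta> * (2 * C + 2)" for k
    using z_mean y_mean zy_mean \<open>\<eta> \<le> 1\<close> C by (intro empirical_cov_approx[OF N])
  have "0 \<le> \<eta> * (2 * C + 2)"
    using order.trans[OF abs_ge_zero y_mean] order.trans[OF abs_ge_zero C(1)] by simp
  then have err: "\<eta> * (2 * C + 2) \<le> CARD('p) * (\<eta> * (2 * C + 2))"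
    by (simp add: mult_le_cancel_right1)
  have "norm ((\<chi> k. cov (empirical N) (\<lambda>i. z i $ k) y) - (\<chi> k. mzy $ k - mz $ k * my))
      \<le> (\<Sum>k\<in>UNIV. \<bar>((\<chi> k. cov (empirical N) (\<lambda>i. z i $ k) y) - (\<chi> k. mzy $ k - mz $ k * my)) $ k\<bar>)"
    by (rule norm_le_l1_cart)
  also have "\<dots> \<le> (\<Sum>k\<in>(UNIV :: 'p set). \<eta> * (2 * C + 2))"
    by (rule sum_mono) (simp add: zy)
  finally have close_c: "norm ((\<chi> k. cov (empirical N) (\<lambda>i. z i $ k) y)
      - (\<chi> k. mzy $ k - mz $ k * my)) \<le> CARD('p) * (\<eta> * (2 * C + 2))"
    by simp
  have close_A: "\<bar>cov (empirical N) (\<lambda>i. z i $ k) (\<lambda>i. z i $ l)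
      - (\<chi> k l. mzz $ k $ l - mz $ k * mz $ l) $ k $ l\<bar> \<le> CARD('p) * (\<eta> * (2 * C + 2))" for k l
    using zz[of k l] err by simp
  show ?thesis
    using small by (intro ols_slope_dist_le[OF N coercive \<open>0 < \<mu>\<close> b _ close_A close_c]) simp
qed

section \<open>Convergence in probability\<close>

definition eventually_whp :: "'a measure \<Rightarrow> (nat \<Rightarrow> 'a \<Rightarrow> bool) \<Rightarrow> bool" where
  "eventually_whp M Q \<longleftrightarrow>
     (\<forall>\<delta>>0. \<exists>N0. \<forall>N\<ge>N0. \<exists>A\<in>sets M. 1 - \<delta> \<le> measure M A \<and> (\<forall>\<omega>\<in>A. Q N \<omega>))"

lemma conv_in_prob_iff_eventually_whp:
  "conv_in_prob M S c \<longleftrightarrow> (\<forall>e>0. eventually_whp M (\<lambda>N \<omega>. dist (S N \<omega>) c \<le> e))"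
  unfolding conv_in_prob_def eventually_whp_def by simp

lemma eventually_whp_mono:
  "eventually_whp M P \<Longrightarrow> (\<And>N \<omega>. P N \<omega> \<Longrightarrow> Q N \<omega>) \<Longrightarrow> eventually_whp M Q"
  unfolding eventually_whp_def by meson

lemma conv_in_prob_diff_const:
  fixes S :: "nat \<Rightarrow> 'a \<Rightarrow> 'b::real_normed_vector"
  shows "conv_in_prob M S c \<Longrightarrow> conv_in_prob M (\<lambda>N \<omega>. S N \<omega> - d) (c - d)"
  unfolding conv_in_prob_def by (simp add: dist_norm)

context prob_space
begin

lemma eventually_whp_dist_le:
  "conv_in_prob M S c \<Longrightarrow> 0 < e \<Longrightarrow> eventually_whp M (\<lambda>N \<omega>. dist (S N \<omega>) c \<le> e)"
  unfolding conv_in_prob_iff_eventually_whp by blast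

lemma eventually_whp_ge: "eventually_whp M (\<lambda>N \<omega>. K \<le> N)"
  unfolding eventually_whp_def by (auto intro!: exI[of _ K] bexI[of _ "space M"] simp: prob_space)

lemma eventually_whp_conj:
  assumes "eventually_whp M P" "eventually_whp M Q"
  shows "eventually_whp M (\<lambda>N \<omega>. P N \<omega> \<and> Q N \<omega>)"
  unfolding eventually_whp_def
proof (intro allI impI)
  fix \<delta> :: real
  assume "0 < \<delta>"
  then have half: "0 < \<delta> / 2"
    by simp
  obtain N1 where N1: "\<forall>N\<ge>N1. \<exists>A\<in>sets M. 1 - \<delta> / 2 \<le> measure M A \<and> (\<forall>\<omega>\<in>A. P N \<omega>)"
    using assms(1) half unfolding eventually_whp_def by blast
  obtain N2 where N2: "\<forall>N\<ge>N2. \<exists>B\<in>sets M. 1 - \<delta> / 2 \<le> measure M B \<and> (\<forall>\<omega>\<in>B. Q N \<omega>)"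
    using assms(2) half unfolding eventually_whp_def by blast
  show "\<exists>N0. \<forall>N\<ge>N0. \<exists>A\<in>sets M. 1 - \<delta> \<le> measure M A \<and> (\<forall>\<omega>\<in>A. P N \<omega> \<and> Q N \<omega>)"
  proof (intro exI allI impI)
    fix N
    assume "max N1 N2 \<le> N"
    then have "N1 \<le> N" "N2 \<le> N"
      by simp_all
    then obtain A B where A: "A \<in> sets M" "1 - \<delta> / 2 \<le> measure M A" "\<forall>\<omega>\<in>A. P N \<omega>"
      and B: "B \<in> sets M" "1 - \<delta> / 2 \<le> measure M B" "\<forall>\<omega>\<in>B. Q N \<omega>"
      using N1 N2 by blast
    have "measure M (A \<union> B) = measure M A + measure M B - measure M (A \<inter> B)"
      using A B by (intro measure_Un3) (auto simp: fmeasurable_eq_sets)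
    moreover have "measure M (A \<union> B) \<le> 1"
      by (rule prob_le_1)
    ultimately have "1 - \<delta> \<le> measure M (A \<inter> B)"
      using A B by linarith
    then show "\<exists>A\<in>sets M. 1 - \<delta> \<le> measure M A \<and> (\<forall>\<omega>\<in>A. P N \<omega> \<and> Q N \<omega>)"
      using A B by (intro bexI[of _ "A \<inter> B"]) auto
  qed
qed

lemma eventually_whp_ball_finite:
  "finite I \<Longrightarrow> (\<And>i. i \<in> I \<Longrightarrow> eventually_whp M (Q i)) \<Longrightarrow> eventually_whp M (\<lambda>N \<omega>. \<forall>i\<in>I. Q i N \<omega>)"
proof (induction I rule: finite_induct)
  case empty
  show ?case
    using eventually_whp_ge by (rule eventually_whp_mono) simp
next
  case (insert a I)
  then have "eventually_whp M (\<lambda>N \<omega>. Q a N \<omega> \<and> (\<forall>i\<in>I. Q i N \<omega>))"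
    by (intro eventually_whp_conj) auto
  then show ?case
    by (rule eventually_whp_mono) auto
qed

lemma eventually_whp_all_finite:
  fixes Q :: "'i::finite \<Rightarrow> nat \<Rightarrow> 'a \<Rightarrow> bool"
  shows "(\<And>i. eventually_whp M (Q i)) \<Longrightarrow> eventually_whp M (\<lambda>N \<omega>. \<forall>i. Q i N \<omega>)"
  using eventually_whp_ball_finite[of UNIV Q] by simp

lemma ols_slope_consistent:
  fixes y :: "nat \<Rightarrow> 'a \<Rightarrow> real" and z :: "nat \<Rightarrow> 'a \<Rightarrow> real^'p"
    and my :: real and mz mzy :: "real^'p" and mzz :: "real^'p^'p"
  assumes y_mean: "conv_in_prob M (\<lambda>N \<omega>. (\<Sum>i<N. y i \<omega>) / N) my"
    and z_mean: "\<And>k. conv_in_prob M (\<lambda>N \<omega>. (\<Sum>i<N. z i \<omega> $ k) / N) (mz $ k)"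
    and zz_mean: "\<And>k l. conv_in_prob M (\<lambda>N \<omega>. (\<Sum>i<N. z i \<omega> $ k * z i \<omega> $ l) / N) (mzz $ k $ l)"
    and zy_mean: "\<And>k. conv_in_prob M (\<lambda>N \<omega>. (\<Sum>i<N. z i \<omega> $ k * y i \<omega>) / N) (mzy $ k)"
    and pd: "pos_def_mat (\<chi> k l. mzz $ k $ l - mz $ k * mz $ l)"
    and b: "(\<chi> k l. mzz $ k $ l - mz $ k * mz $ l) *v b = (\<chi> k. mzy $ k - mz $ k * my)"
  shows "conv_in_prob M (\<lambda>N \<omega>. ols_slope N (\<lambda>i. y i \<omega>) (\<lambda>i. z i \<omega>)) b"
  unfolding conv_in_prob_iff_eventually_whp
proof (intro allI impI)
  fix e :: real
  assume "0 < e"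
  obtain \<mu> where \<mu>: "0 < \<mu>" "\<And>v. \<mu> * (norm v)\<^sup>2 \<le> v \<bullet> ((\<chi> k l. mzz $ k $ l - mz $ k * mz $ l) *v v)"
    using pos_def_mat_coercive[OF pd] by blast
  define C where "C = \<bar>my\<bar> + (\<Sum>k\<in>UNIV. \<bar>mz $ k\<bar>)"
  have C: "\<bar>my\<bar> \<le> C" "\<bar>mz $ k\<bar> \<le> C" for k
    unfolding C_def using member_le_sum[of k UNIV "\<lambda>k. \<bar>mz $ k\<bar>"] by (auto intro: sum_nonneg)
  have lim: "((\<lambda>\<eta>. CARD('p) * (\<eta> * (2 * C + 2)) * CARD('p)\<^sup>2) \<longlongrightarrow> 0) (at_right 0)"
    "((\<lambda>\<eta>. 2 * (CARD('p) * (\<eta> * (2 * C + 2))) * (CARD('p)\<^sup>2 * norm b + 1) / \<mu>) \<longlongrightarrow> 0) (at_right 0)"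
    using \<mu>(1) by (auto intro!: tendsto_eq_intros)
  have "\<forall>\<^sub>F \<eta> in at_right 0. 0 < \<eta> \<and> \<eta> < 1
      \<and> CARD('p) * (\<eta> * (2 * C + 2)) * CARD('p)\<^sup>2 < \<mu> / 2
      \<and> 2 * (CARD('p) * (\<eta> * (2 * C + 2))) * (CARD('p)\<^sup>2 * norm b + 1) / \<mu> < e"
    by (intro eventually_conj eventually_at_right_less order_tendstoD(2)[OF tendsto_ident_at]
        order_tendstoD(2)[OF lim(1)] order_tendstoD(2)[OF lim(2)]) (simp_all add: \<mu>(1) \<open>0 < e\<close>)
  then obtain \<eta> :: real where \<eta>: "0 < \<eta>" "\<eta> < 1"
    "CARD('p) * (\<eta> * (2 * C + 2)) * CARD('p)\<^sup>2 < \<mu> / 2"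
    "2 * (CARD('p) * (\<eta> * (2 * C + 2))) * (CARD('p)\<^sup>2 * norm b + 1) / \<mu> < e"
    using eventually_happens'[OF trivial_limit_at_right_real] by blast
  have "eventually_whp M (\<lambda>N \<omega>. 1 \<le> N \<and> dist ((\<Sum>i<N. y i \<omega>) / N) my \<le> \<eta>
      \<and> (\<forall>k. dist ((\<Sum>i<N. z i \<omega> $ k) / N) (mz $ k) \<le> \<eta>)
      \<and> (\<forall>k l. dist ((\<Sum>i<N. z i \<omega> $ k * z i \<omega> $ l) / N) (mzz $ k $ l) \<le> \<eta>)
      \<and> (\<forall>k. dist ((\<Sum>i<N. z i \<omega> $ k * y i \<omega>) / N) (mzy $ k) \<le> \<eta>))"
    using \<eta>(1)
    by (intro eventually_whp_conj eventually_whp_ge eventually_whp_all_finite eventually_whp_dist_le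
        y_mean z_mean zz_mean zy_mean)
  then show "eventually_whp M (\<lambda>N \<omega>. dist (ols_slope N (\<lambda>i. y i \<omega>) (\<lambda>i. z i \<omega>)) b \<le> e)"
    using \<eta>(2-4) C
    by (elim eventually_whp_mono)
      (auto simp: dist_norm dist_real_def
        intro!: order.trans[OF ols_slope_dist_le_of_moments[OF _ \<mu>(2,1) b]])
qed

end

lemma stackV_nth [simp]: "stackV y z x w $ Inl i = y" "stackV y z x w $ Inr (Inl l) = z $ l"
  by (simp_all add: stackV_def)

theorem proposition1:
  fixes M :: "'a measure"
    and Y :: "'a \<Rightarrow> real" and Z :: "'a \<Rightarrow> real^'p" and X W :: "'a \<Rightarrow> real^'d"
    and Ys :: "nat \<Rightarrow> 'a \<Rightarrow> real" and Zs :: "nat \<Rightarrow> 'a \<Rightarrow> real^'p"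
    and Xs Ws :: "nat \<Rightarrow> 'a \<Rightarrow> real^'d"
    and \<alpha> :: real and \<beta>Z :: "real^'p" and \<beta>X :: "real^'d"
    and P :: "'p set"
  assumes M: "prob_space M"
    and meas: "Y \<in> borel_measurable M" "Z \<in> borel_measurable M"
              "X \<in> borel_measurable M" "W \<in> borel_measurable M"
    and second_moments: "integrable M (\<lambda>\<omega>. (Y \<omega>)^2)"
              "\<And>l. integrable M (\<lambda>\<omega>. (Z \<omega> $ l)^2)"
              "\<And>j. integrable M (\<lambda>\<omega>. (X \<omega> $ j)^2)"
              "\<And>j. integrable M (\<lambda>\<omega>. (W \<omega> $ j)^2)"
    and pop_reg: "\<And>a bZ bX. integral\<^sup>L M (\<lambda>\<omega>. (1/2) * (Y \<omega> - \<alpha> - Z \<omega> \<bullet> \<beta>Z - X \<omega> \<bullet> \<beta>X)^2)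
                          \<le> integral\<^sup>L M (\<lambda>\<omega>. (1/2) * (Y \<omega> - a - Z \<omega> \<bullet> bZ - X \<omega> \<bullet> bX)^2)"
    and samples_meas: "\<And>i. Ys i \<in> borel_measurable M" "\<And>i. Zs i \<in> borel_measurable M"
              "\<And>i. Xs i \<in> borel_measurable M" "\<And>i. Ws i \<in> borel_measurable M"
    and ident_distr: "\<And>i. distr M borel (\<lambda>\<omega>. (Ys i \<omega>, Zs i \<omega>, Xs i \<omega>, Ws i \<omega>))
                          = distr M borel (\<lambda>\<omega>. (Y \<omega>, Z \<omega>, X \<omega>, W \<omega>))"
    and first_moments_conv: "\<And>k. conv_in_prob M
              (\<lambda>N \<omega>. (\<Sum>i<N. stackV (Ys i \<omega>) (Zs i \<omega>) (Xs i \<omega>) (Ws i \<omega>) $ k) / real N)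
              (integral\<^sup>L M (\<lambda>\<omega>. stackV (Y \<omega>) (Z \<omega>) (X \<omega>) (W \<omega>) $ k))"
    and second_moments_conv: "\<And>k k'. conv_in_prob M
              (\<lambda>N \<omega>. (\<Sum>i<N. stackV (Ys i \<omega>) (Zs i \<omega>) (Xs i \<omega>) (Ws i \<omega>) $ k
                             * stackV (Ys i \<omega>) (Zs i \<omega>) (Xs i \<omega>) (Ws i \<omega>) $ k') / real N)
              (integral\<^sup>L M (\<lambda>\<omega>. stackV (Y \<omega>) (Z \<omega>) (X \<omega>) (W \<omega>) $ k
                             * stackV (Y \<omega>) (Z \<omega>) (X \<omega>) (W \<omega>) $ k'))"
    and uncorr: "\<And>i j. cov M (\<lambda>\<omega>. Ys i \<omega> - \<alpha> - Zs i \<omega> \<bullet> \<beta>Z - Xs i \<omega> \<bullet> \<beta>X)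
                           (\<lambda>\<omega>. Ws i \<omega> $ j - Xs i \<omega> $ j) = 0"
    and pd_ZW: "pos_def_mat (covmat M (\<lambda>\<omega>. vstack (Z \<omega>) (W \<omega>)))"
    and pd_ZX: "pos_def_mat (covmat M (\<lambda>\<omega>. vstack (Z \<omega>) (X \<omega>)))"
    and no_benefit_X: "\<And>j. \<beta>X $ j \<le> 0"
    and no_benefit_Z: "\<And>l. l \<in> P \<Longrightarrow> \<beta>Z $ l \<le> 0"
    and weak_partial_PC: "\<And>l j. l \<in> P \<Longrightarrow>
              partial_corr M (\<lambda>\<omega>. Z \<omega> $ l) (\<lambda>\<omega>. X \<omega> $ j) (\<lambda>m \<omega>. Z \<omega> $ m) (- {l}) > 0"
  shows "\<exists>bias :: real^'p.
           conv_in_prob M (\<lambda>N \<omega>. ols_slope N (\<lambda>i. Ys i \<omega>) (\<lambda>i. Zs i \<omega>) - \<beta>Z) bias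
         \<and> (\<forall>k\<in>P. bias $ k \<le> 0)"
proof -
  interpret prob_space M
    by (rule M)
  have Y: "square_integrable M Y"
    using meas(1) second_moments(1) by (simp add: square_integrable_def)
  have Z: "\<And>l. square_integrable M (\<lambda>\<omega>. Z \<omega> $ l)" and X: "\<And>j. square_integrable M (\<lambda>\<omega>. X \<omega> $ j)"
    using meas second_moments by (simp_all add: square_integrable_component)
  have pd_Z: "pos_def_mat (covmat M Z)"
    using pd_ZX by (rule pos_def_mat_covmat_vstack_left)
  obtain b :: "real^'p" where b: "covmat M Z *v b = (\<chi> l. cov M (\<lambda>\<omega>. Z \<omega> $ l) Y)"
    using pos_def_mat_solvable[OF pd_Z] .
  have sign: "\<forall>k\<in>P. (b - \<beta>Z) $ k \<le> 0"
    using pop_reg weak_partial_PC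
    by (intro ballI short_regression_bias_nonpos[OF Y Z X pd_Z _ b no_benefit_X]) simp_all
  have "conv_in_prob M (\<lambda>N \<omega>. ols_slope N (\<lambda>i. Ys i \<omega>) (\<lambda>i. Zs i \<omega>)) b"
    using first_moments_conv[of "Inl 1"] first_moments_conv[of "Inr (Inl _)"]
      second_moments_conv[of "Inr (Inl _)" "Inr (Inl _)"]
      second_moments_conv[of "Inr (Inl _)" "Inl 1"] pd_Z b
    by (intro ols_slope_consistent[where my = "integral\<^sup>L M Y"
          and mz = "\<chi> k. integral\<^sup>L M (\<lambda>\<omega>. Z \<omega> $ k)"
          and mzz = "\<chi> k l. integral\<^sup>L M (\<lambda>\<omega>. Z \<omega> $ k * Z \<omega> $ l)"
          and mzy = "\<chi> k. integral\<^sup>L M (\<lambda>\<omega>. Z \<omega> $ k * Y \<omega>)"])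
      (simp_all add: covmat_def cov_def)
  then show ?thesis
    using sign by (intro exI[of _ "b - \<beta>Z"] conjI conv_in_prob_diff_const)
qed

end
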